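(* Let $N\ge 2$, $a\in\mathbb{R}$, $\alpha\in(0,1]$, and let $P\in\mathbb{R}^{N\times N}$ be a symmetric, doubly stochastic matrix with nonnegative entries whose eigenvalues satisfy $-1<\lambda_N(P)\le\dots\le\lambda_2(P)<\lambda_1(P)=1$. Let $x_{t+1}=ax_t+r_t$ and $y_{i,t}=x_t+w_{i,t}$ ($i=1,\dots,N$), where $x_0$ is an independent finite random variable, the innovations $r_t$ are zero mean, independent over time with variance $\sigma_r^2$, the observation noises $w_{i,t}$ are zero mean with variance $\sigma_w^2$, independent over time and across agents, and uncorrelated with the innovations. Define the estimates $$\hat{x}_{i,t+1}=a\Big(\sum_{j=1}^N p_{ij}\hat{x}_{j,t}+\alpha(y_{i,t}-\hat{x}_{i,t})\Big),\qquad \tilde{x}_{i,t+1}=a\Big(\sum_{j=1}^N p_{ij}\tilde{x}_{j,t}+\alpha\Big(\sum_{j=1}^N p_{ij}y_{j,t}-\tilde{x}_{i,t}\Big)\Big),$$ error vectors $\hat{\xi}_t=(\hat{x}_{i,t}-x_t)_{i=1}^N$, $\tilde{\xi}_t=(\tilde{x}_{i,t}-x_t)_{i=1}^N$, and $Q=a(P-\alpha I_N)$. Suppose the spectral radius satisfies $\rho(Q)<1$. Let $\hat{\Sigma}=\lim_{t\to\infty}\mathbb{E}[\hat{\xi}_t\hat{\xi}_t^{\mathsf T}]$, $\tilde{\Sigma}=\lim_{t\to\infty}\mathbb{E}[\tilde{\xi}_t\tilde{\xi}_t^{\mathsf T}]$, $\hat{\mathrm{MSD}}(P,\alpha)=\frac1N\mathrm{Tr}(\hat{\Sigma})$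 and $\tilde{\mathrm{MSD}}(P,\alpha)=\frac1N\mathrm{Tr}(\tilde{\Sigma})$. Then $$\hat{\mathrm{MSD}}(P,\alpha)=R_{MSD}(\alpha)+\frac1N\sum_{i=1}^N\frac{a^2\alpha^2\sigma_w^2}{1-a^2(\lambda_i(P)-\alpha)^2},\qquad \tilde{\mathrm{MSD}}(P,\alpha)=R_{MSD}(\alpha)+\frac1N\sum_{i=1}^N\frac{a^2\alpha^2\sigma_w^2\lambda_i^2(P)}{1-a^2(\lambda_i(P)-\alpha)^2},$$ where $R_{MSD}(\alpha)=\dfrac{\sigma_r^2}{1-a^2(1-\alpha)^2}$.
   Context: $\lambda_i(P)$ denote the eigenvalues of $P$; MSD stands for steady-state mean square deviation per agent. *)

theory Defs
  imports "HOL-Probability.Probability" "Jordan_Normal_Form.Spectral_Radius"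
begin

primrec state :: "real \<Rightarrow> ('w \<Rightarrow> real) \<Rightarrow> (nat \<Rightarrow> 'w \<Rightarrow> real) \<Rightarrow> nat \<Rightarrow> 'w \<Rightarrow> real" where
  "state a x0 r 0 = x0"
| "state a x0 r (Suc t) = (\<lambda>\<omega>. a * state a x0 r t \<omega> + r t \<omega>)"

definition obs :: "real \<Rightarrow> ('w \<Rightarrow> real) \<Rightarrow> (nat \<Rightarrow> 'w \<Rightarrow> real) \<Rightarrow> (nat \<Rightarrow> nat \<Rightarrow> 'w \<Rightarrow> real)
    \<Rightarrow> nat \<Rightarrow> nat \<Rightarrow> 'w \<Rightarrow> real" where
  "obs a x0 r w i t = (\<lambda>\<omega>. state a x0 r t \<omega> + w i t \<omega>)"

text \<open>First estimator (hat): agents indexed 0..N-1, initial estimates xh0 (deterministic).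
  Arguments: N, P, a, alpha, observation process y, initial estimates.\<close>
primrec est_hat :: "nat \<Rightarrow> real mat \<Rightarrow> real \<Rightarrow> real \<Rightarrow> (nat \<Rightarrow> nat \<Rightarrow> 'w \<Rightarrow> real)
    \<Rightarrow> (nat \<Rightarrow> real) \<Rightarrow> nat \<Rightarrow> nat \<Rightarrow> 'w \<Rightarrow> real" where
  "est_hat N P a \<alpha> y xh0 0 = (\<lambda>i \<omega>. xh0 i)"
| "est_hat N P a \<alpha> y xh0 (Suc t) = (\<lambda>i \<omega>.
     a * ((\<Sum>j<N. P $$ (i, j) * est_hat N P a \<alpha> y xh0 t j \<omega>)
          + \<alpha> * (y i t \<omega> - est_hat N P a \<alpha> y xh0 t i \<omega>)))"

primrec est_tilde :: "nat \<Rightarrow> real mat \<Rightarrow> real \<Rightarrow> real \<Rightarrow> (nat \<Rightarrow> nat \<Rightarrow> 'w \<Rightarrow> real)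
    \<Rightarrow> (nat \<Rightarrow> real) \<Rightarrow> nat \<Rightarrow> nat \<Rightarrow> 'w \<Rightarrow> real" where
  "est_tilde N P a \<alpha> y xt0 0 = (\<lambda>i \<omega>. xt0 i)"
| "est_tilde N P a \<alpha> y xt0 (Suc t) = (\<lambda>i \<omega>.
     a * ((\<Sum>j<N. P $$ (i, j) * est_tilde N P a \<alpha> y xt0 t j \<omega>)
          + \<alpha> * ((\<Sum>j<N. P $$ (i, j) * y j t \<omega>) - est_tilde N P a \<alpha> y xt0 t i \<omega>)))"

definition sym_doubly_stochastic :: "nat \<Rightarrow> real mat \<Rightarrow> bool" where
  "sym_doubly_stochastic N P \<longleftrightarrow> P \<in> carrier_mat N N \<and> transpose_mat P = P
     \<and> (\<forall>i<N. \<forall>j<N. P $$ (i, j) \<ge> 0)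
     \<and> (\<forall>i<N. (\<Sum>j<N. P $$ (i, j)) = 1)
     \<and> (\<forall>j<N. (\<Sum>i<N. P $$ (i, j)) = 1)"

text \<open>lam 0 \<ge> lam 1 \<ge> ... \<ge> lam (N-1) are the eigenvalues of P counted with multiplicity
  (lambda_{i+1}(P) in the paper is lam i here).\<close>
definition eigenvalues_desc :: "nat \<Rightarrow> real mat \<Rightarrow> (nat \<Rightarrow> real) \<Rightarrow> bool" where
  "eigenvalues_desc N P lam \<longleftrightarrow>
     char_poly P = (\<Prod>i<N. [:- lam i, 1:]) \<and> (\<forall>i j. i \<le> j \<longrightarrow> j < N \<longrightarrow> lam j \<le> lam i)"

end

theory Submission
  imports Defs
begin

text \<open>The estimation errors of both estimators obey a linear recursion
  xi(t+1) = Q xi(t) + a alpha P^l w(t) - r(t) 1 with Q = a (P - alpha I), where l = 0 for the first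
  estimator and l = 1 for the second. The noise entering at time t is uncorrelated with xi(t), so the
  error covariance follows the discrete Lyapunov recursion S(t+1) = Q S(t) Q + D with
  D = sigma_w^2 a^2 alpha^2 P^(2l) + sigma_r^2 1 1^T. As P is symmetric, so is Q, and the entries of
  Q^k are bounded by sqrt N rho(Q)^k; hence S(t) converges to the sum of Q^k D Q^k over k.
  Triangularising P (Schur) gives tr (Q^(2k) P^(2l)) = sum of (a (lam i - alpha))^(2k) lam i^(2l),
  while the all-ones part of D contributes N (a (1 - alpha))^(2k), because Q has constant row sums
  a (1 - alpha). Summing the geometric series yields the two formulas.\<close>

section \<open>Traces and triangularisation\<close>

definition mat_trace :: "'a :: comm_semiring_0 mat \<Rightarrow> 'a" where
  "mat_trace A = (\<Sum>i<dim_row A. A $$ (i, i))"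

lemma mat_trace_mult_comm:
  fixes A B :: "'a :: comm_semiring_0 mat"
  assumes "A \<in> carrier_mat n m" "B \<in> carrier_mat m n"
  shows "mat_trace (A * B) = mat_trace (B * A)"
proof -
  have "mat_trace (A * B) = (\<Sum>i<n. \<Sum>k<m. A $$ (i, k) * B $$ (k, i))"
    using assms by (simp add: mat_trace_def scalar_prod_def lessThan_atLeast0)
  also have "\<dots> = (\<Sum>k<m. \<Sum>i<n. B $$ (k, i) * A $$ (i, k))"
    by (subst sum.swap) (simp add: mult.commute)
  also have "\<dots> = mat_trace (B * A)"
    using assms by (simp add: mat_trace_def scalar_prod_def lessThan_atLeast0)
  finally show ?thesis .
qed

lemma mat_trace_similar:
  fixes A B :: "'a :: comm_ring_1 mat"
  assumes "similar_mat_wit A B S T"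
  shows "mat_trace A = mat_trace B"
proof -
  define n where "n = dim_row A"
  from similar_mat_witD[OF n_def assms]
  have A: "A = S * B * T" and TS: "T * S = 1\<^sub>m n"
    and carr: "B \<in> carrier_mat n n" "S \<in> carrier_mat n n" "T \<in> carrier_mat n n" by auto
  have "mat_trace A = mat_trace (S * (B * T))"
    using A carr by (simp add: assoc_mult_mat[of _ n n _ n _ n])
  also have "\<dots> = mat_trace (B * T * S)"
    using carr by (intro mat_trace_mult_comm) auto
  also have "\<dots> = mat_trace B"
    using carr TS by (simp add: assoc_mult_mat[of _ n n _ n _ n])
  finally show ?thesis .
qed

lemma similar_mat_wit_mult:
  fixes A B :: "'a :: semiring_1 mat"
  assumes wit: "similar_mat_wit A B S T" and wit': "similar_mat_wit A' B' S T"
  shows "similar_mat_wit (A * A') (B * B') S T"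
proof -
  define n where "n = dim_row A"
  from similar_mat_witD[OF n_def wit]
  have A: "A = S * B * T" and ST: "S * T = 1\<^sub>m n" and TS: "T * S = 1\<^sub>m n"
    and B: "B \<in> carrier_mat n n" and S: "S \<in> carrier_mat n n" and T: "T \<in> carrier_mat n n"
    by auto
  have "dim_row A' = n"
    using similar_mat_witD(6)[OF refl wit'] S by auto
  from similar_mat_witD[OF this[symmetric] wit']
  have A': "A' = S * B' * T" and B': "B' \<in> carrier_mat n n"
    by auto
  have "A * A' = S * (B * (T * S) * B') * T"
    unfolding A A' using B B' S T by (simp add: assoc_mult_mat[of _ n n _ n _ n])
  also have "B * (T * S) = B" unfolding TS using B by simp
  finally have AA': "A * A' = S * (B * B') * T" .
  show ?thesis
    by (rule similar_mat_witI[OF ST TS AA']) (use AA' B B' S T in auto)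
qed

lemma similar_mat_wit_affine:
  fixes A B :: "'a :: comm_ring_1 mat"
  assumes wit: "similar_mat_wit A B S T" and A: "A \<in> carrier_mat n n"
  shows "similar_mat_wit (c \<cdot>\<^sub>m (A - d \<cdot>\<^sub>m 1\<^sub>m n)) (c \<cdot>\<^sub>m (B - d \<cdot>\<^sub>m 1\<^sub>m n)) S T"
proof (rule similar_mat_wit_smult)
  note ST = similar_mat_witD2(1)[OF A wit] and TS = similar_mat_witD2(2)[OF A wit]
    and AB = similar_mat_witD2(3)[OF A wit] and carr = similar_mat_witD2(5-7)[OF A wit]
  have "S * (B - d \<cdot>\<^sub>m 1\<^sub>m n) = S * B - d \<cdot>\<^sub>m S"
    using carr by (simp add: mult_minus_distrib_mat[of _ n n _ n] mult_smult_distrib[of _ n n _ n])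
  then have "S * (B - d \<cdot>\<^sub>m 1\<^sub>m n) * T = S * B * T - d \<cdot>\<^sub>m (S * T)"
    using carr by (simp add: minus_mult_distrib_mat[of _ n n _ _ n] mult_smult_assoc_mat[of _ n n _ n])
  then have "A - d \<cdot>\<^sub>m 1\<^sub>m n = S * (B - d \<cdot>\<^sub>m 1\<^sub>m n) * T"
    using AB ST by simp
  with carr A ST TS show "similar_mat_wit (A - d \<cdot>\<^sub>m 1\<^sub>m n) (B - d \<cdot>\<^sub>m 1\<^sub>m n) S T"
    by (auto simp: similar_mat_wit_def Let_def)
qed

lemma upper_triangular_mult:
  fixes A B :: "'a :: semiring_0 mat"
  assumes A: "A \<in> carrier_mat n n" and B: "B \<in> carrier_mat n n"
    and "upper_triangular A" "upper_triangular B"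
  shows "upper_triangular (A * B)"
proof
  fix i j assume "j < i" "i < dim_row (A * B)"
  then have "A $$ (i, k) * B $$ (k, j) = 0" if "k < n" for k
    using that assms upper_triangularD[of A k i] upper_triangularD[of B j k] by (cases "k < i") auto
  then show "(A * B) $$ (i, j) = 0"
    using \<open>j < i\<close> \<open>i < dim_row (A * B)\<close> A B by (simp add: scalar_prod_def)
qed

lemma diag_upper_triangular_mult:
  fixes A B :: "'a :: semiring_0 mat"
  assumes A: "A \<in> carrier_mat n n" and B: "B \<in> carrier_mat n n"
    and "upper_triangular A" "upper_triangular B" and i: "i < n"
  shows "(A * B) $$ (i, i) = A $$ (i, i) * B $$ (i, i)"
proof -
  have "A $$ (i, k) * B $$ (k, i) = 0" if "k < n" "k \<noteq> i" for k
    using that assms upper_triangularD[of A k i] upper_triangularD[of B i k] by (cases "k < i") auto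
  then have "(\<Sum>k\<in>{0..<n}. A $$ (i, k) * B $$ (k, i)) = (\<Sum>k\<in>{i}. A $$ (i, k) * B $$ (k, i))"
    using i by (intro sum.mono_neutral_right) auto
  then show ?thesis
    using A B i by (simp add: scalar_prod_def)
qed

lemma upper_triangular_pow:
  fixes A :: "'a :: semiring_1 mat"
  assumes A: "A \<in> carrier_mat n n" and "upper_triangular A"
  shows "upper_triangular (A ^\<^sub>m k)"
  by (induction k) (use assms upper_triangular_mult[OF pow_carrier_mat[OF A] A] in auto)

lemma diag_upper_triangular_pow:
  fixes A :: "'a :: comm_semiring_1 mat"
  assumes A: "A \<in> carrier_mat n n" and "upper_triangular A" and i: "i < n"
  shows "(A ^\<^sub>m k) $$ (i, i) = A $$ (i, i) ^ k"
proof (induction k)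
  case (Suc k)
  then show ?case
    using diag_upper_triangular_mult[OF pow_carrier_mat[OF A] A upper_triangular_pow[OF assms(1,2)]]
      assms by (simp add: mult.commute)
qed (use A i in simp)

lemma similar_upper_triangular_eigenvalues:
  fixes P :: "'a :: conjugatable_ordered_field mat"
  assumes P: "P \<in> carrier_mat n n" and cp: "char_poly P = (\<Prod>i<n. [:- lam i, 1:])"
  obtains B S T where "similar_mat_wit P B S T" "upper_triangular B" "B \<in> carrier_mat n n"
    "\<And>i. i < n \<Longrightarrow> B $$ (i, i) = lam i"
proof -
  have cp': "char_poly P = (\<Prod>e\<leftarrow>map lam [0..<n]. [:- e, 1:])"
    unfolding cp by (simp add: prod.list_conv_set_nth atLeast0LessThan)
  obtain B S T where sch: "schur_decomposition P (map lam [0..<n]) = (B, S, T)"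
    by (cases "schur_decomposition P (map lam [0..<n])") auto
  from schur_decomposition[OF P cp' sch]
  have wit: "similar_mat_wit P B S T" and ut: "upper_triangular B"
    and diag: "diag_mat B = map lam [0..<n]" by auto
  have B: "B \<in> carrier_mat n n" by (rule similar_mat_witD2(5)[OF P wit])
  have "B $$ (i, i) = lam i" if "i < n" for i
    using arg_cong[OF diag, of "\<lambda>xs. xs ! i"] B that by (simp add: diag_mat_def)
  with wit ut B show thesis by (rule that)
qed

lemma char_poly_affine:
  fixes P :: "'a :: conjugatable_ordered_field mat"
  assumes P: "P \<in> carrier_mat n n" and cp: "char_poly P = (\<Prod>i<n. [:- lam i, 1:])"
  shows "char_poly (c \<cdot>\<^sub>m (P - d \<cdot>\<^sub>m 1\<^sub>m n)) = (\<Prod>i<n. [:- (c * (lam i - d)), 1:])"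
proof -
  obtain B S T where wit: "similar_mat_wit P B S T" and ut: "upper_triangular B"
    and B: "B \<in> carrier_mat n n" and diag: "\<And>i. i < n \<Longrightarrow> B $$ (i, i) = lam i"
    using similar_upper_triangular_eigenvalues[OF P cp] by blast
  let ?B = "c \<cdot>\<^sub>m (B - d \<cdot>\<^sub>m 1\<^sub>m n)"
  have B': "?B \<in> carrier_mat n n" using B by (simp add: minus_carrier_mat)
  have "upper_triangular ?B" using ut B by (auto simp: upper_triangular_def)
  have "diag_mat ?B = map (\<lambda>i. c * (lam i - d)) [0..<n]"
    using B diag by (intro nth_equalityI) (auto simp: diag_mat_def)
  have "char_poly (c \<cdot>\<^sub>m (P - d \<cdot>\<^sub>m 1\<^sub>m n)) = char_poly ?B"
    using similar_mat_wit_affine[OF wit P] by (intro char_poly_similar) (auto simp: similar_mat_def)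
  also have "\<dots> = (\<Prod>e\<leftarrow>diag_mat ?B. [:- e, 1:])"
    by (rule char_poly_upper_triangular[OF B' \<open>upper_triangular ?B\<close>])
  also have "\<dots> = (\<Prod>i<n. [:- (c * (lam i - d)), 1:])"
    unfolding \<open>diag_mat ?B = _\<close> by (simp add: prod.list_conv_set_nth atLeast0LessThan)
  finally show ?thesis .
qed

lemma mat_trace_affine_pow_mult_pow:
  fixes P :: "'a :: conjugatable_ordered_field mat"
  assumes P: "P \<in> carrier_mat n n" and cp: "char_poly P = (\<Prod>i<n. [:- lam i, 1:])"
  shows "mat_trace ((c \<cdot>\<^sub>m (P - d \<cdot>\<^sub>m 1\<^sub>m n)) ^\<^sub>m k * P ^\<^sub>m l)
    = (\<Sum>i<n. (c * (lam i - d)) ^ k * lam i ^ l)"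
proof -
  obtain B S T where wit: "similar_mat_wit P B S T" and ut: "upper_triangular B"
    and B: "B \<in> carrier_mat n n" and diag: "\<And>i. i < n \<Longrightarrow> B $$ (i, i) = lam i"
    using similar_upper_triangular_eigenvalues[OF P cp] by blast
  define Bq where "Bq = c \<cdot>\<^sub>m (B - d \<cdot>\<^sub>m 1\<^sub>m n)"
  have Bq: "Bq \<in> carrier_mat n n" using B by (simp add: Bq_def minus_carrier_mat)
  have ut_Bq: "upper_triangular Bq" using ut B by (auto simp: Bq_def upper_triangular_def)
  have diag_Bq: "Bq $$ (i, i) = c * (lam i - d)" if "i < n" for i
    using that B diag by (simp add: Bq_def)
  have diag_prod: "(Bq ^\<^sub>m k * B ^\<^sub>m l) $$ (i, i) = Bq $$ (i, i) ^ k * B $$ (i, i) ^ l"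
    if i: "i < n" for i
  proof -
    have "(Bq ^\<^sub>m k * B ^\<^sub>m l) $$ (i, i) = (Bq ^\<^sub>m k) $$ (i, i) * (B ^\<^sub>m l) $$ (i, i)"
      by (rule diag_upper_triangular_mult[OF pow_carrier_mat[OF Bq] pow_carrier_mat[OF B]
            upper_triangular_pow[OF Bq ut_Bq] upper_triangular_pow[OF B ut] i])
    also have "\<dots> = Bq $$ (i, i) ^ k * B $$ (i, i) ^ l"
      by (simp only: diag_upper_triangular_pow[OF Bq ut_Bq i] diag_upper_triangular_pow[OF B ut i])
    finally show ?thesis .
  qed
  have "mat_trace ((c \<cdot>\<^sub>m (P - d \<cdot>\<^sub>m 1\<^sub>m n)) ^\<^sub>m k * P ^\<^sub>m l) = mat_trace (Bq ^\<^sub>m k * B ^\<^sub>m l)"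
    unfolding Bq_def
    by (rule mat_trace_similar[OF similar_mat_wit_mult[OF
          similar_mat_wit_pow[OF similar_mat_wit_affine[OF wit P]] similar_mat_wit_pow[OF wit]]])
  also have "\<dots> = (\<Sum>i<n. Bq $$ (i, i) ^ k * B $$ (i, i) ^ l)"
    unfolding mat_trace_def using Bq by (intro sum.cong) (simp_all add: diag_prod)
  finally show ?thesis by (simp add: diag diag_Bq)
qed

lemma abs_char_poly_root_le_spectral_radius:
  fixes A :: "real mat"
  assumes A: "A \<in> carrier_mat n n" and cp: "char_poly A = (\<Prod>i<n. [:- mu i, 1:])" and i: "i < n"
  shows "\<bar>mu i\<bar> \<le> spectral_radius (map_mat complex_of_real A)"
proof -
  have "poly (char_poly A) (mu i) = 0"
    using i unfolding cp by (force simp: poly_prod)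
  then have "poly (char_poly (map_mat complex_of_real A)) (complex_of_real (mu i)) = 0"
    by (simp add: of_real_hom.char_poly_hom[OF A])
  then have "complex_of_real (mu i) \<in> spectrum (map_mat complex_of_real A)"
    using spectrum_root_char_poly[of "map_mat complex_of_real A" n] A by simp
  then show ?thesis
    using spectral_radius_mem_max(2)[of "map_mat complex_of_real A" n] A i by force
qed

lemma pow_mat_add:
  fixes A :: "'a :: semiring_1 mat"
  assumes A: "A \<in> carrier_mat n n"
  shows "A ^\<^sub>m k * A ^\<^sub>m l = A ^\<^sub>m (k + l)"
proof (induction l)
  case (Suc l)
  have "A ^\<^sub>m k * A ^\<^sub>m Suc l = A ^\<^sub>m k * A ^\<^sub>m l * A"
    using A by (simp add: assoc_mult_mat[of _ n n _ n _ n])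
  then show ?case using Suc by simp
qed (use A in simp)

lemma mult_pow_mat_commute:
  fixes A :: "'a :: semiring_1 mat"
  assumes A: "A \<in> carrier_mat n n"
  shows "A * A ^\<^sub>m k = A ^\<^sub>m k * A"
  using pow_mat_add[OF A, of 1 k] pow_mat_add[OF A, of k 1] A by (simp add: add.commute)

lemma transpose_pow_mat:
  fixes A :: "'a :: comm_semiring_1 mat"
  assumes A: "A \<in> carrier_mat n n"
  shows "transpose_mat (A ^\<^sub>m k) = transpose_mat A ^\<^sub>m k"
proof (induction k)
  case (Suc k)
  have "transpose_mat (A ^\<^sub>m Suc k) = transpose_mat A * transpose_mat (A ^\<^sub>m k)"
    using A by (simp add: transpose_mult[of _ n n _ n])
  also have "\<dots> = transpose_mat A ^\<^sub>m Suc k"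
    using Suc mult_pow_mat_commute[of "transpose_mat A" n k] A by simp
  finally show ?case .
qed (use A in simp)

lemma symmetric_entry_sq_le_mat_trace:
  fixes A :: "'a :: linordered_idom mat"
  assumes A: "A \<in> carrier_mat n n" and sym: "transpose_mat A = A" and i: "i < n" and j: "j < n"
  shows "(A $$ (i, j))\<^sup>2 \<le> mat_trace (A * A)"
proof -
  have "A $$ (b, a) = A $$ (a, b)" if "a < n" "b < n" for a b
    using arg_cong[OF sym, of "\<lambda>B. B $$ (a, b)"] A that by simp
  then have trace: "mat_trace (A * A) = (\<Sum>a<n. \<Sum>b<n. (A $$ (a, b))\<^sup>2)"
    using A by (auto simp: mat_trace_def scalar_prod_def lessThan_atLeast0 power2_eq_square
        intro!: sum.cong)
  have "(A $$ (i, j))\<^sup>2 \<le> (\<Sum>b<n. (A $$ (i, b))\<^sup>2)"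
    using j by (intro member_le_sum) auto
  also have "\<dots> \<le> (\<Sum>a<n. \<Sum>b<n. (A $$ (a, b))\<^sup>2)"
    using i by (intro member_le_sum[of i "{..<n}" "\<lambda>a. \<Sum>b<n. (A $$ (a, b))\<^sup>2"] sum_nonneg) auto
  finally show ?thesis unfolding trace .
qed

lemma row_sum_pow_mat:
  fixes A :: "'a :: comm_semiring_1 mat"
  assumes A: "A \<in> carrier_mat n n" and rows: "\<And>i. i < n \<Longrightarrow> (\<Sum>j<n. A $$ (i, j)) = \<rho>"
    and i: "i < n"
  shows "(\<Sum>j<n. (A ^\<^sub>m k) $$ (i, j)) = \<rho> ^ k"
  using i
proof (induction k arbitrary: i)
  case 0
  then show ?case using A by (simp add: sum.delta' lessThan_def one_mat_def)
next
  case (Suc k)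
  have "(\<Sum>j<n. (A ^\<^sub>m Suc k) $$ (i, j)) = (\<Sum>j<n. \<Sum>l<n. (A ^\<^sub>m k) $$ (i, l) * A $$ (l, j))"
    using A Suc.prems by (intro sum.cong) (auto simp: scalar_prod_def lessThan_atLeast0)
  also have "\<dots> = (\<Sum>l<n. (A ^\<^sub>m k) $$ (i, l) * (\<Sum>j<n. A $$ (l, j)))"
    by (subst sum.swap) (simp add: sum_distrib_left)
  also have "\<dots> = \<rho> ^ Suc k"
    using Suc rows by (simp add: mult.commute[of _ \<rho>] sum_distrib_left[symmetric])
  finally show ?case .
qed

lemma symmetric_pow_mat_mult_transpose_entry:
  fixes P :: "'a :: comm_semiring_1 mat"
  assumes P: "P \<in> carrier_mat n n" and sym: "transpose_mat P = P" and i: "i < n" and j: "j < n"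
  shows "(\<Sum>k<n. (P ^\<^sub>m l) $$ (i, k) * (P ^\<^sub>m l) $$ (j, k)) = (P ^\<^sub>m (2 * l)) $$ (i, j)"
proof -
  have "(P ^\<^sub>m l) $$ (j, k) = (P ^\<^sub>m l) $$ (k, j)" if "k < n" for k
    using arg_cong[OF transpose_pow_mat[OF P, of l], of "\<lambda>B. B $$ (k, j)"] sym P that j by simp
  then show ?thesis
    using i j P by (auto simp: pow_mat_add[OF P, symmetric] mult_2 scalar_prod_def lessThan_atLeast0
        intro!: sum.cong)
qed

section \<open>The discrete Lyapunov recursion\<close>

lemma sandwich_entry:
  fixes A X B :: "'a :: comm_semiring_0 mat"
  assumes A: "A \<in> carrier_mat n n" and X: "X \<in> carrier_mat n n" and B: "B \<in> carrier_mat n n"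
    and i: "i < n" and j: "j < n"
  shows "(A * X * B) $$ (i, j) = (\<Sum>a<n. \<Sum>b<n. A $$ (i, a) * X $$ (a, b) * B $$ (b, j))"
proof -
  have "(A * X * B) $$ (i, j) = (\<Sum>a<n. A $$ (i, a) * (\<Sum>b<n. X $$ (a, b) * B $$ (b, j)))"
    using assms by (simp add: assoc_mult_mat[of _ n n _ n _ n] scalar_prod_def lessThan_atLeast0)
  then show ?thesis by (simp add: sum_distrib_left mult.assoc)
qed

lemma sandwich_pow_Suc:
  fixes Q X :: "'a :: semiring_1 mat"
  assumes Q: "Q \<in> carrier_mat n n" and X: "X \<in> carrier_mat n n"
  shows "Q * (Q ^\<^sub>m k * X * Q ^\<^sub>m k) * Q = Q ^\<^sub>m Suc k * X * Q ^\<^sub>m Suc k"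
proof -
  have "Q ^\<^sub>m Suc k * X * Q ^\<^sub>m Suc k = (Q * Q ^\<^sub>m k) * X * (Q ^\<^sub>m k * Q)"
    using mult_pow_mat_commute[OF Q] by simp
  also have "\<dots> = Q * (Q ^\<^sub>m k * X * Q ^\<^sub>m k) * Q"
    using Q X by (simp add: assoc_mult_mat[of _ n n _ n _ n] mult_carrier_mat[of _ n n _ n])
  finally show ?thesis by simp
qed

lemma lyapunov_recursion_closed_form:
  fixes Q D :: "'a :: comm_semiring_1 mat" and C :: "nat \<Rightarrow> nat \<Rightarrow> nat \<Rightarrow> 'a"
  assumes Q: "Q \<in> carrier_mat n n" and D: "D \<in> carrier_mat n n"
    and rec: "\<And>t i j. i < n \<Longrightarrow> j < n \<Longrightarrow>
       C (Suc t) i j = (\<Sum>a<n. \<Sum>b<n. Q $$ (i, a) * C t a b * Q $$ (b, j)) + D $$ (i, j)"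
    and "i < n" "j < n"
  shows "C t i j = (Q ^\<^sub>m t * mat n n (\<lambda>(a, b). C 0 a b) * Q ^\<^sub>m t) $$ (i, j)
    + (\<Sum>k<t. (Q ^\<^sub>m k * D * Q ^\<^sub>m k) $$ (i, j))"
  using \<open>i < n\<close> \<open>j < n\<close>
proof (induction t arbitrary: i j)
  case 0
  then show ?case using Q by simp
next
  case (Suc t)
  define C0 where "C0 = mat n n (\<lambda>(a, b). C 0 a b)"
  define G where "G k = Q ^\<^sub>m k * D * Q ^\<^sub>m k" for k
  define X where "X = Q ^\<^sub>m t * C0 * Q ^\<^sub>m t"
  have C0: "C0 \<in> carrier_mat n n" by (simp add: C0_def)
  have X: "X \<in> carrier_mat n n" and G: "\<And>k. G k \<in> carrier_mat n n"
    using Q C0 D by (simp_all add: X_def G_def mult_carrier_mat[of _ n n _ n])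
  have sandwich_Q: "(\<Sum>a<n. \<Sum>b<n. Q $$ (i, a) * Y $$ (a, b) * Q $$ (b, j)) = (Q * Y * Q) $$ (i, j)"
    if "Y \<in> carrier_mat n n" for Y
    using sandwich_entry[OF Q that Q Suc.prems] by simp
  have "C (Suc t) i j
      = (\<Sum>a<n. \<Sum>b<n. Q $$ (i, a) * (X $$ (a, b) + (\<Sum>k<t. G k $$ (a, b))) * Q $$ (b, j)) + D $$ (i, j)"
    using rec[OF Suc.prems] Suc.IH by (simp add: X_def C0_def G_def)
  also have "\<dots> = (\<Sum>a<n. \<Sum>b<n. Q $$ (i, a) * X $$ (a, b) * Q $$ (b, j))
      + (\<Sum>k<t. \<Sum>a<n. \<Sum>b<n. Q $$ (i, a) * G k $$ (a, b) * Q $$ (b, j)) + D $$ (i, j)"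
    by (simp add: distrib_left distrib_right sum.distrib sum_distrib_left sum_distrib_right
        sum.swap[of _ "{..<t}"])
  also have "\<dots> = (Q * X * Q) $$ (i, j) + (\<Sum>k<t. (Q * G k * Q) $$ (i, j)) + D $$ (i, j)"
    by (simp only: sandwich_Q[OF X] sandwich_Q[OF G])
  also have "\<dots> = (Q ^\<^sub>m Suc t * C0 * Q ^\<^sub>m Suc t) $$ (i, j) + (\<Sum>k<t. G (Suc k) $$ (i, j)) + G 0 $$ (i, j)"
    unfolding X_def G_def sandwich_pow_Suc[OF Q C0] sandwich_pow_Suc[OF Q D] using Q D Suc.prems by simp
  finally show ?case
    by (simp add: C0_def G_def sum.lessThan_Suc_shift add_ac del: sum.lessThan_Suc)
qed

lemma abs_sandwich_entry_le:
  fixes A X :: "real mat"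
  assumes A: "A \<in> carrier_mat n n" and X: "X \<in> carrier_mat n n"
    and bound: "\<And>a b. a < n \<Longrightarrow> b < n \<Longrightarrow> \<bar>A $$ (a, b)\<bar> \<le> c" and i: "i < n" and j: "j < n"
  shows "\<bar>(A * X * A) $$ (i, j)\<bar> \<le> (\<Sum>a<n. \<Sum>b<n. \<bar>X $$ (a, b)\<bar>) * c\<^sup>2"
proof -
  have c: "0 \<le> c" using bound[OF i i] by linarith
  have "\<bar>(A * X * A) $$ (i, j)\<bar> = \<bar>\<Sum>a<n. \<Sum>b<n. A $$ (i, a) * X $$ (a, b) * A $$ (b, j)\<bar>"
    by (simp add: sandwich_entry[OF A X A i j])
  also have "\<dots> \<le> (\<Sum>a<n. \<Sum>b<n. \<bar>A $$ (i, a) * X $$ (a, b) * A $$ (b, j)\<bar>)"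
    by (rule order.trans[OF sum_abs sum_mono]) (rule sum_abs)
  also have "\<dots> \<le> (\<Sum>a<n. \<Sum>b<n. \<bar>X $$ (a, b)\<bar> * c\<^sup>2)"
  proof (intro sum_mono)
    fix a b assume "a \<in> {..<n}" "b \<in> {..<n}"
    then have "\<bar>A $$ (i, a)\<bar> * \<bar>A $$ (b, j)\<bar> \<le> c * c"
      using bound i j c by (intro mult_mono) auto
    then have "\<bar>X $$ (a, b)\<bar> * (\<bar>A $$ (i, a)\<bar> * \<bar>A $$ (b, j)\<bar>) \<le> \<bar>X $$ (a, b)\<bar> * (c * c)"
      by (rule mult_left_mono) simp
    then show "\<bar>A $$ (i, a) * X $$ (a, b) * A $$ (b, j)\<bar> \<le> \<bar>X $$ (a, b)\<bar> * c\<^sup>2"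
      by (simp add: abs_mult power2_eq_square ac_simps)
  qed
  also have "\<dots> = (\<Sum>a<n. \<Sum>b<n. \<bar>X $$ (a, b)\<bar>) * c\<^sup>2"
    by (simp add: sum_distrib_right)
  finally show ?thesis .
qed

lemma lyapunov_recursion_tendsto:
  fixes Q D :: "real mat" and C :: "nat \<Rightarrow> nat \<Rightarrow> nat \<Rightarrow> real"
  assumes Q: "Q \<in> carrier_mat n n" and D: "D \<in> carrier_mat n n"
    and decay: "\<And>k a b. a < n \<Longrightarrow> b < n \<Longrightarrow> \<bar>(Q ^\<^sub>m k) $$ (a, b)\<bar> \<le> K * m ^ k"
    and "0 \<le> m" "m < 1"
    and rec: "\<And>t i j. i < n \<Longrightarrow> j < n \<Longrightarrow>
       C (Suc t) i j = (\<Sum>a<n. \<Sum>b<n. Q $$ (i, a) * C t a b * Q $$ (b, j)) + D $$ (i, j)"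
    and i: "i < n" and j: "j < n"
  shows "summable (\<lambda>k. (Q ^\<^sub>m k * D * Q ^\<^sub>m k) $$ (i, j))"
    and "(\<lambda>t. C t i j) \<longlonglongrightarrow> (\<Sum>k. (Q ^\<^sub>m k * D * Q ^\<^sub>m k) $$ (i, j))"
proof -
  have geometric_bound: "\<bar>(Q ^\<^sub>m k * X * Q ^\<^sub>m k) $$ (i, j)\<bar>
      \<le> ((\<Sum>a<n. \<Sum>b<n. \<bar>X $$ (a, b)\<bar>) * K\<^sup>2) * (m\<^sup>2) ^ k"
    if X: "X \<in> carrier_mat n n" for X k
    using abs_sandwich_entry_le[OF pow_carrier_mat[OF Q] X decay i j]
    by (simp add: power_mult_distrib power_mult[symmetric] ac_simps)
  have m2: "\<bar>m\<^sup>2\<bar> < 1"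
    using \<open>0 \<le> m\<close> \<open>m < 1\<close> by (simp add: abs_square_less_1)
  show summable: "summable (\<lambda>k. (Q ^\<^sub>m k * D * Q ^\<^sub>m k) $$ (i, j))"
    by (rule summable_comparison_test'[OF summable_mult[OF summable_geometric[OF m2[folded real_norm_def]]]])
      (use geometric_bound[OF D] in auto)
  define C0 where "C0 = mat n n (\<lambda>(a, b). C 0 a b)"
  have "(\<lambda>t. (Q ^\<^sub>m t * C0 * Q ^\<^sub>m t) $$ (i, j)) \<longlonglongrightarrow> 0"
  proof (rule Lim_null_comparison)
    show "\<forall>\<^sub>F t in sequentially. norm ((Q ^\<^sub>m t * C0 * Q ^\<^sub>m t) $$ (i, j))
      \<le> ((\<Sum>a<n. \<Sum>b<n. \<bar>C0 $$ (a, b)\<bar>) * K\<^sup>2) * (m\<^sup>2) ^ t"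
      using geometric_bound[of C0] by (simp add: C0_def)
    show "(\<lambda>t. ((\<Sum>a<n. \<Sum>b<n. \<bar>C0 $$ (a, b)\<bar>) * K\<^sup>2) * (m\<^sup>2) ^ t) \<longlonglongrightarrow> 0"
      by (rule tendsto_mult_right_zero[OF LIMSEQ_power_zero]) (use m2 in simp)
  qed
  then have "(\<lambda>t. (Q ^\<^sub>m t * C0 * Q ^\<^sub>m t) $$ (i, j) + (\<Sum>k<t. (Q ^\<^sub>m k * D * Q ^\<^sub>m k) $$ (i, j)))
      \<longlonglongrightarrow> 0 + (\<Sum>k. (Q ^\<^sub>m k * D * Q ^\<^sub>m k) $$ (i, j))"
    by (intro tendsto_add summable_LIMSEQ summable)
  then show "(\<lambda>t. C t i j) \<longlonglongrightarrow> (\<Sum>k. (Q ^\<^sub>m k * D * Q ^\<^sub>m k) $$ (i, j))"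
    using lyapunov_recursion_closed_form[where C = C, OF Q D rec i j] by (simp add: C0_def)
qed

lemma transpose_affine_mat:
  fixes P :: "'a :: comm_ring_1 mat"
  assumes P: "P \<in> carrier_mat n n" and sym: "transpose_mat P = P"
  shows "transpose_mat (c \<cdot>\<^sub>m (P - d \<cdot>\<^sub>m 1\<^sub>m n)) = c \<cdot>\<^sub>m (P - d \<cdot>\<^sub>m 1\<^sub>m n)"
proof (rule eq_matI)
  fix i j assume "i < dim_row (c \<cdot>\<^sub>m (P - d \<cdot>\<^sub>m 1\<^sub>m n))" "j < dim_col (c \<cdot>\<^sub>m (P - d \<cdot>\<^sub>m 1\<^sub>m n))"
  then show "transpose_mat (c \<cdot>\<^sub>m (P - d \<cdot>\<^sub>m 1\<^sub>m n)) $$ (i, j) = (c \<cdot>\<^sub>m (P - d \<cdot>\<^sub>m 1\<^sub>m n)) $$ (i, j)"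
    using P arg_cong[OF sym, of "\<lambda>B. B $$ (i, j)"] by auto
qed (use P in auto)

lemma abs_affine_pow_entry_le:
  fixes P :: "real mat"
  assumes P: "P \<in> carrier_mat n n" and sym: "transpose_mat P = P"
    and cp: "char_poly P = (\<Prod>i<n. [:- lam i, 1:])"
    and bound: "\<And>i. i < n \<Longrightarrow> \<bar>c * (lam i - d)\<bar> \<le> m" and i: "i < n" and j: "j < n"
  shows "\<bar>((c \<cdot>\<^sub>m (P - d \<cdot>\<^sub>m 1\<^sub>m n)) ^\<^sub>m k) $$ (i, j)\<bar> \<le> sqrt (real n) * m ^ k"
proof -
  define Q where "Q = c \<cdot>\<^sub>m (P - d \<cdot>\<^sub>m 1\<^sub>m n)"
  have Q: "Q \<in> carrier_mat n n" using P by (simp add: Q_def minus_carrier_mat)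
  have m: "0 \<le> m" using bound[OF i] by linarith
  have "transpose_mat (Q ^\<^sub>m k) = Q ^\<^sub>m k"
    using transpose_pow_mat[OF Q] transpose_affine_mat[OF P sym] by (simp add: Q_def)
  then have "((Q ^\<^sub>m k) $$ (i, j))\<^sup>2 \<le> mat_trace (Q ^\<^sub>m k * Q ^\<^sub>m k)"
    using Q i j by (intro symmetric_entry_sq_le_mat_trace) auto
  also have "\<dots> = mat_trace (Q ^\<^sub>m (2 * k) * P ^\<^sub>m 0)"
    using Q P by (simp add: pow_mat_add[OF Q] mult_2)
  also have "\<dots> = (\<Sum>i<n. (c * (lam i - d)) ^ (2 * k))"
    using mat_trace_affine_pow_mult_pow[OF P cp, of c d "2 * k" 0] by (simp add: Q_def)
  also have "\<dots> \<le> (\<Sum>i<n. m ^ (2 * k))"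
  proof (intro sum_mono)
    fix i assume "i \<in> {..<n}"
    then have "\<bar>c * (lam i - d)\<bar> ^ (2 * k) \<le> m ^ (2 * k)"
      using bound by (intro power_mono) auto
    then show "(c * (lam i - d)) ^ (2 * k) \<le> m ^ (2 * k)"
      by (simp add: power_even_abs)
  qed
  also have "\<dots> = (sqrt (real n) * m ^ k)\<^sup>2"
    by (simp add: power_mult_distrib power_mult[symmetric] mult.commute)
  finally have "\<bar>(Q ^\<^sub>m k) $$ (i, j)\<bar>\<^sup>2 \<le> (sqrt (real n) * m ^ k)\<^sup>2" by simp
  then show ?thesis
    unfolding Q_def by (rule power2_le_imp_le) (use m in simp)
qed

lemma mat_trace_sandwich_plus_const:
  fixes A X :: "'a :: comm_ring_1 mat"
  assumes A: "A \<in> carrier_mat n n" and X: "X \<in> carrier_mat n n" and sym: "transpose_mat A = A"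
  shows "mat_trace (A * mat n n (\<lambda>(a, b). \<beta> * X $$ (a, b) + \<gamma>) * A)
    = \<beta> * mat_trace (A * X * A) + \<gamma> * (\<Sum>i<n. (\<Sum>j<n. A $$ (i, j))\<^sup>2)"
proof -
  define D where "D = mat n n (\<lambda>(a, b). \<beta> * X $$ (a, b) + \<gamma>)"
  have entry: "(A * D * A) $$ (i, i) = \<beta> * (A * X * A) $$ (i, i) + \<gamma> * (\<Sum>j<n. A $$ (i, j))\<^sup>2"
    if i: "i < n" for i
  proof -
    have A_sym: "A $$ (b, i) = A $$ (i, b)" if "b < n" for b
      using arg_cong[OF sym, of "\<lambda>B. B $$ (i, b)"] A i that by simp
    have "(A * D * A) $$ (i, i)
        = (\<Sum>a<n. \<Sum>b<n. \<beta> * (A $$ (i, a) * X $$ (a, b) * A $$ (b, i)) + \<gamma> * (A $$ (i, a) * A $$ (i, b)))"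
      using sandwich_entry[OF A _ A i i, of D] A_sym by (auto simp: D_def algebra_simps intro!: sum.cong)
    also have "\<dots> = \<beta> * (A * X * A) $$ (i, i) + \<gamma> * (\<Sum>j<n. A $$ (i, j))\<^sup>2"
      unfolding power2_eq_square sum_product
      by (simp only: sandwich_entry[OF A X A i i] sum.distrib sum_distrib_left)
    finally show ?thesis .
  qed
  have "mat_trace (A * D * A) = (\<Sum>i<n. \<beta> * (A * X * A) $$ (i, i) + \<gamma> * (\<Sum>j<n. A $$ (i, j))\<^sup>2)"
    unfolding mat_trace_def using A by (simp only: index_mult_mat(2) carrier_matD)
      (rule sum.cong[OF refl entry], simp)
  then show ?thesis
    using A by (simp add: D_def mat_trace_def sum.distrib sum_distrib_left)
qed

lemma mat_trace_sandwich_affine_pow: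
  fixes P :: "real mat"
  assumes P: "P \<in> carrier_mat n n" and sym: "transpose_mat P = P"
    and rows: "\<And>i. i < n \<Longrightarrow> (\<Sum>j<n. P $$ (i, j)) = 1"
    and cp: "char_poly P = (\<Prod>i<n. [:- lam i, 1:])"
  shows "mat_trace ((c \<cdot>\<^sub>m (P - d \<cdot>\<^sub>m 1\<^sub>m n)) ^\<^sub>m k * mat n n (\<lambda>(a, b). \<beta> * (P ^\<^sub>m l) $$ (a, b) + \<gamma>)
      * (c \<cdot>\<^sub>m (P - d \<cdot>\<^sub>m 1\<^sub>m n)) ^\<^sub>m k)
    = \<beta> * (\<Sum>i<n. (c * (lam i - d)) ^ (2 * k) * lam i ^ l) + \<gamma> * real n * (c * (1 - d)) ^ (2 * k)"
proof -
  define Q where "Q = c \<cdot>\<^sub>m (P - d \<cdot>\<^sub>m 1\<^sub>m n)"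
  have Q: "Q \<in> carrier_mat n n" using P by (simp add: Q_def minus_carrier_mat)
  have Qk: "Q ^\<^sub>m k \<in> carrier_mat n n" and Pl: "P ^\<^sub>m l \<in> carrier_mat n n" using Q P by simp_all
  have Qk_sym: "transpose_mat (Q ^\<^sub>m k) = Q ^\<^sub>m k"
    using transpose_pow_mat[OF Q] transpose_affine_mat[OF P sym] by (simp add: Q_def)
  have Q_rows: "(\<Sum>j<n. Q $$ (i, j)) = c * (1 - d)" if "i < n" for i
  proof -
    have "(\<Sum>j<n. Q $$ (i, j)) = (\<Sum>j<n. c * P $$ (i, j) - (if j = i then c * d else 0))"
      using that P by (intro sum.cong) (auto simp: Q_def algebra_simps)
    also have "\<dots> = c * (1 - d)"
      using that rows[OF that] by (simp add: sum_subtractf sum_distrib_left[symmetric] algebra_simps)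
    finally show ?thesis .
  qed
  have "mat_trace (Q ^\<^sub>m k * P ^\<^sub>m l * Q ^\<^sub>m k) = mat_trace (Q ^\<^sub>m k * (Q ^\<^sub>m k * P ^\<^sub>m l))"
    using Qk Pl by (intro mat_trace_mult_comm) auto
  also have "Q ^\<^sub>m k * (Q ^\<^sub>m k * P ^\<^sub>m l) = Q ^\<^sub>m (2 * k) * P ^\<^sub>m l"
    using Qk Pl by (simp add: assoc_mult_mat[symmetric, of _ n n _ n _ n] pow_mat_add[OF Q] mult_2)
  also have "mat_trace \<dots> = (\<Sum>i<n. (c * (lam i - d)) ^ (2 * k) * lam i ^ l)"
    unfolding Q_def by (rule mat_trace_affine_pow_mult_pow[OF P cp])
  finally have "mat_trace (Q ^\<^sub>m k * P ^\<^sub>m l * Q ^\<^sub>m k) = (\<Sum>i<n. (c * (lam i - d)) ^ (2 * k) * lam i ^ l)" .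
  moreover have "(\<Sum>i<n. (\<Sum>j<n. (Q ^\<^sub>m k) $$ (i, j))\<^sup>2) = real n * (c * (1 - d)) ^ (2 * k)"
    by (simp add: row_sum_pow_mat[OF Q Q_rows] power_mult[symmetric] mult.commute)
  ultimately show ?thesis
    using mat_trace_sandwich_plus_const[OF Qk Pl Qk_sym, of \<beta> \<gamma>] by (simp add: Q_def)
qed
lemma mat_trace_sandwich_affine_pow_sums:
  fixes P :: "real mat"
  assumes P: "P \<in> carrier_mat n n" and sym: "transpose_mat P = P"
    and rows: "\<And>i. i < n \<Longrightarrow> (\<Sum>j<n. P $$ (i, j)) = 1"
    and cp: "char_poly P = (\<Prod>i<n. [:- lam i, 1:])"
    and stable: "\<And>i. i < n \<Longrightarrow> \<bar>c * (lam i - d)\<bar> < 1" and stable_rows: "\<bar>c * (1 - d)\<bar> < 1"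
  shows "(\<lambda>k. mat_trace ((c \<cdot>\<^sub>m (P - d \<cdot>\<^sub>m 1\<^sub>m n)) ^\<^sub>m k
      * mat n n (\<lambda>(a, b). \<beta> * (P ^\<^sub>m l) $$ (a, b) + \<gamma>) * (c \<cdot>\<^sub>m (P - d \<cdot>\<^sub>m 1\<^sub>m n)) ^\<^sub>m k))
    sums (\<beta> * (\<Sum>i<n. lam i ^ l / (1 - (c * (lam i - d))\<^sup>2)) + \<gamma> * real n / (1 - (c * (1 - d))\<^sup>2))"
proof -
  have geometric: "(\<lambda>k. (x\<^sup>2) ^ k) sums (1 / (1 - x\<^sup>2))" if "\<bar>x\<bar> < 1" for x :: real
    using geometric_sums[of "x\<^sup>2"] that by (simp add: abs_square_less_1)
  have "(\<lambda>k. \<Sum>i<n. ((c * (lam i - d))\<^sup>2) ^ k * lam i ^ l) sums (\<Sum>i<n. lam i ^ l / (1 - (c * (lam i - d))\<^sup>2))"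
    using sums_mult2[OF geometric[OF stable]] by (intro sums_sum) simp
  from sums_add[OF sums_mult[OF this, of \<beta>] sums_mult[OF geometric[OF stable_rows], of "\<gamma> * real n"]]
  have "(\<lambda>k. \<beta> * (\<Sum>i<n. (c * (lam i - d)) ^ (2 * k) * lam i ^ l) + \<gamma> * real n * (c * (1 - d)) ^ (2 * k))
    sums (\<beta> * (\<Sum>i<n. lam i ^ l / (1 - (c * (lam i - d))\<^sup>2)) + \<gamma> * real n / (1 - (c * (1 - d))\<^sup>2))"
    by (simp add: power_mult)
  then show ?thesis
    by (simp only: mat_trace_sandwich_affine_pow[OF P sym rows cp])
qed

lemma abs_affine_eigenvalue_lt_1:
  fixes P :: "real mat"
  assumes P: "P \<in> carrier_mat n n" and cp: "char_poly P = (\<Prod>i<n. [:- lam i, 1:])"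
    and stable: "spectral_radius (map_mat complex_of_real (c \<cdot>\<^sub>m (P - d \<cdot>\<^sub>m 1\<^sub>m n))) < 1"
    and i: "i < n"
  shows "\<bar>c * (lam i - d)\<bar> < 1"
proof -
  have "c \<cdot>\<^sub>m (P - d \<cdot>\<^sub>m 1\<^sub>m n) \<in> carrier_mat n n" using P by (simp add: minus_carrier_mat)
  from abs_char_poly_root_le_spectral_radius[OF this char_poly_affine[OF P cp] i] stable
  show ?thesis by linarith
qed

lemma lyapunov_recursion_steady_state:
  fixes P :: "real mat" and c d :: real and n :: nat and C :: "nat \<Rightarrow> nat \<Rightarrow> nat \<Rightarrow> real"
  defines "Q \<equiv> c \<cdot>\<^sub>m (P - d \<cdot>\<^sub>m 1\<^sub>m n)"
  assumes n: "0 < n" and P: "P \<in> carrier_mat n n" and sym: "transpose_mat P = P"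
    and rows: "\<And>i. i < n \<Longrightarrow> (\<Sum>j<n. P $$ (i, j)) = 1"
    and cp: "char_poly P = (\<Prod>i<n. [:- lam i, 1:])" and lam0: "lam 0 = 1"
    and stable: "\<And>i. i < n \<Longrightarrow> \<bar>c * (lam i - d)\<bar> < 1"
    and rec: "\<And>t i j. i < n \<Longrightarrow> j < n \<Longrightarrow>
      C (Suc t) i j = (\<Sum>a<n. \<Sum>b<n. Q $$ (i, a) * C t a b * Q $$ (b, j)) + \<beta> * (P ^\<^sub>m l) $$ (i, j) + \<gamma>"
  shows "\<exists>S. (\<forall>i<n. \<forall>j<n. (\<lambda>t. C t i j) \<longlonglongrightarrow> S i j)
    \<and> (\<Sum>i<n. S i i) = \<beta> * (\<Sum>i<n. lam i ^ l / (1 - (c * (lam i - d))\<^sup>2)) + \<gamma> * real n / (1 - (c * (1 - d))\<^sup>2)"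
proof -
  define D where "D = mat n n (\<lambda>(i, j). \<beta> * (P ^\<^sub>m l) $$ (i, j) + \<gamma>)"
  have Q: "Q \<in> carrier_mat n n" and D: "D \<in> carrier_mat n n"
    using P by (simp_all add: Q_def D_def minus_carrier_mat)
  have rec_D: "C (Suc t) i j = (\<Sum>a<n. \<Sum>b<n. Q $$ (i, a) * C t a b * Q $$ (b, j)) + D $$ (i, j)"
    if "i < n" "j < n" for t i j
    using rec[OF that] that by (simp add: D_def)
  define m where "m = Max ((\<lambda>i. \<bar>c * (lam i - d)\<bar>) ` {..<n})"
  have m_ge: "\<bar>c * (lam i - d)\<bar> \<le> m" if "i < n" for i
    unfolding m_def using that by (intro Max_ge) auto
  have "0 \<le> m"
    using m_ge[OF n] abs_ge_zero order_trans by blast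
  moreover have "m < 1"
    unfolding m_def using stable n by (subst Max_less_iff) auto
  ultimately have m: "0 \<le> m" "m < 1" .
  have decay: "\<bar>(Q ^\<^sub>m k) $$ (i, j)\<bar> \<le> sqrt (real n) * m ^ k" if "i < n" "j < n" for k i j
    unfolding Q_def by (rule abs_affine_pow_entry_le[OF P sym cp m_ge that])
  define S where "S i j = (\<Sum>k. (Q ^\<^sub>m k * D * Q ^\<^sub>m k) $$ (i, j))" for i j
  have summable: "summable (\<lambda>k. (Q ^\<^sub>m k * D * Q ^\<^sub>m k) $$ (i, j))"
    and limit: "(\<lambda>t. C t i j) \<longlonglongrightarrow> S i j" if "i < n" "j < n" for i j
    unfolding S_def by (rule lyapunov_recursion_tendsto[where C = C]; fact Q D decay m rec_D that)+
  have "(\<lambda>k. \<Sum>i<n. (Q ^\<^sub>m k * D * Q ^\<^sub>m k) $$ (i, i))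
    sums (\<beta> * (\<Sum>i<n. lam i ^ l / (1 - (c * (lam i - d))\<^sup>2)) + \<gamma> * real n / (1 - (c * (1 - d))\<^sup>2))"
    using mat_trace_sandwich_affine_pow_sums[OF P sym rows cp stable] stable[OF n] Q
    by (simp add: Q_def D_def mat_trace_def lam0)
  moreover have "(\<Sum>i<n. S i i) = (\<Sum>k. \<Sum>i<n. (Q ^\<^sub>m k * D * Q ^\<^sub>m k) $$ (i, i))"
    unfolding S_def by (rule suminf_sum[symmetric]) (use summable in auto)
  ultimately show ?thesis
    using limit by (auto simp: sums_iff)
qed

section \<open>Second-order noise model\<close>

text \<open>Only second moments enter the argument: the independence hypotheses of the theorem are
  used solely through the uncorrelatedness assumptions of this locale.\<close>

locale uncorrelated_noises = prob_space M for M :: "'w measure" +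
  fixes N :: nat and x0 :: "'w \<Rightarrow> real" and r :: "nat \<Rightarrow> 'w \<Rightarrow> real"
    and w :: "nat \<Rightarrow> nat \<Rightarrow> 'w \<Rightarrow> real" and \<sigma>r \<sigma>w :: real
  assumes x0_measurable: "x0 \<in> borel_measurable M"
    and x0_square_integrable: "integrable M (\<lambda>\<omega>. (x0 \<omega>)\<^sup>2)"
    and x0_r: "\<And>t. expectation (\<lambda>\<omega>. x0 \<omega> * r t \<omega>) = 0"
    and x0_w: "\<And>j t. j < N \<Longrightarrow> expectation (\<lambda>\<omega>. x0 \<omega> * w j t \<omega>) = 0"
    and r_measurable: "\<And>t. r t \<in> borel_measurable M"
    and r_square_integrable: "\<And>t. integrable M (\<lambda>\<omega>. (r t \<omega>)\<^sup>2)"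
    and r_mean: "\<And>t. expectation (r t) = 0"
    and r_variance: "\<And>t. expectation (\<lambda>\<omega>. (r t \<omega>)\<^sup>2) = \<sigma>r\<^sup>2"
    and r_r: "\<And>s t. s \<noteq> t \<Longrightarrow> expectation (\<lambda>\<omega>. r s \<omega> * r t \<omega>) = 0"
    and w_measurable: "\<And>i t. i < N \<Longrightarrow> w i t \<in> borel_measurable M"
    and w_square_integrable: "\<And>i t. i < N \<Longrightarrow> integrable M (\<lambda>\<omega>. (w i t \<omega>)\<^sup>2)"
    and w_mean: "\<And>i t. i < N \<Longrightarrow> expectation (w i t) = 0"
    and w_variance: "\<And>i t. i < N \<Longrightarrow> expectation (\<lambda>\<omega>. (w i t \<omega>)\<^sup>2) = \<sigma>w\<^sup>2"
    and w_w: "\<And>i j s t. i < N \<Longrightarrow> j < N \<Longrightarrow> (i, s) \<noteq> (j, t) \<Longrightarrow>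
      expectation (\<lambda>\<omega>. w i s \<omega> * w j t \<omega>) = 0"
    and w_r: "\<And>i t s. i < N \<Longrightarrow> expectation (\<lambda>\<omega>. w i t \<omega> * r s \<omega>) = 0"
begin

definition square_integrable :: "('w \<Rightarrow> real) \<Rightarrow> bool" where
  "square_integrable f \<longleftrightarrow> f \<in> borel_measurable M \<and> integrable M (\<lambda>\<omega>. (f \<omega>)\<^sup>2)"

definition cross_moment :: "('w \<Rightarrow> real) \<Rightarrow> ('w \<Rightarrow> real) \<Rightarrow> real" where
  "cross_moment f g = expectation (\<lambda>\<omega>. f \<omega> * g \<omega>)"

lemma integrable_mult_square_integrable:
  assumes "square_integrable f" "square_integrable g"
  shows "integrable M (\<lambda>\<omega>. f \<omega> * g \<omega>)"
proof (rule Bochner_Integration.integrable_bound)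
  show "integrable M (\<lambda>\<omega>. (f \<omega>)\<^sup>2 + (g \<omega>)\<^sup>2)"
    using assms by (auto simp: square_integrable_def)
  show "(\<lambda>\<omega>. f \<omega> * g \<omega>) \<in> borel_measurable M"
    using assms by (auto simp: square_integrable_def)
  show "AE \<omega> in M. norm (f \<omega> * g \<omega>) \<le> norm ((f \<omega>)\<^sup>2 + (g \<omega>)\<^sup>2)"
  proof (rule AE_I2)
    fix \<omega>
    have "2 * \<bar>f \<omega> * g \<omega>\<bar> \<le> (f \<omega>)\<^sup>2 + (g \<omega>)\<^sup>2"
      using sum_squares_bound[of "\<bar>f \<omega>\<bar>" "\<bar>g \<omega>\<bar>"] by (simp add: abs_mult)
    then show "norm (f \<omega> * g \<omega>) \<le> norm ((f \<omega>)\<^sup>2 + (g \<omega>)\<^sup>2)" by simp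
  qed
qed

lemma square_integrable_const: "square_integrable (\<lambda>\<omega>. c)"
  by (simp add: square_integrable_def)

lemma square_integrable_add:
  assumes f: "square_integrable f" and g: "square_integrable g"
  shows "square_integrable (\<lambda>\<omega>. f \<omega> + g \<omega>)"
proof -
  have "integrable M (\<lambda>\<omega>. (f \<omega>)\<^sup>2 + (g \<omega>)\<^sup>2 + 2 * (f \<omega> * g \<omega>))"
    using assms integrable_mult_square_integrable[OF assms] by (auto simp: square_integrable_def)
  then show ?thesis
    using assms by (auto simp: square_integrable_def power2_sum mult.assoc)
qed

lemma square_integrable_scale:
  "square_integrable f \<Longrightarrow> square_integrable (\<lambda>\<omega>. c * f \<omega>)"
  by (simp add: square_integrable_def power_mult_distrib borel_measurable_times)

lemma square_integrable_sum:
  "(\<And>i. i \<in> A \<Longrightarrow> square_integrable (f i)) \<Longrightarrow> square_integrable (\<lambda>\<omega>. \<Sum>i\<in>A. f i \<omega>)"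
  by (induction A rule: infinite_finite_induct) (auto intro: square_integrable_add square_integrable_const)

lemma cross_moment_commute: "cross_moment f g = cross_moment g f"
  by (simp add: cross_moment_def mult.commute)

lemma cross_moment_add_left:
  assumes "square_integrable f" "square_integrable g" "square_integrable h"
  shows "cross_moment (\<lambda>\<omega>. f \<omega> + g \<omega>) h = cross_moment f h + cross_moment g h"
  using integrable_mult_square_integrable[OF assms(1,3)] integrable_mult_square_integrable[OF assms(2,3)]
  by (simp add: cross_moment_def distrib_right)

lemma cross_moment_add_right:
  assumes "square_integrable f" "square_integrable g" "square_integrable h"
  shows "cross_moment h (\<lambda>\<omega>. f \<omega> + g \<omega>) = cross_moment h f + cross_moment h g"
  using cross_moment_add_left[OF assms] by (simp add: cross_moment_commute)

lemma cross_moment_scale_right: "cross_moment f (\<lambda>\<omega>. c * g \<omega>) = c * cross_moment f g"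
  by (simp add: cross_moment_def ac_simps)

lemma cross_moment_sum_right:
  assumes "square_integrable f" "\<And>b. b \<in> B \<Longrightarrow> square_integrable (g b)"
  shows "cross_moment f (\<lambda>\<omega>. \<Sum>b\<in>B. d b * g b \<omega>) = (\<Sum>b\<in>B. d b * cross_moment f (g b))"
proof -
  have "cross_moment f (\<lambda>\<omega>. \<Sum>b\<in>B. d b * g b \<omega>) = expectation (\<lambda>\<omega>. \<Sum>b\<in>B. d b * (f \<omega> * g b \<omega>))"
    by (simp add: cross_moment_def sum_distrib_left ac_simps)
  also have "\<dots> = (\<Sum>b\<in>B. d b * cross_moment f (g b))"
    using assms by (simp add: cross_moment_def integrable_mult_square_integrable)
  finally show ?thesis .
qed

lemma cross_moment_linear_combinations:
  assumes "\<And>a. a \<in> A \<Longrightarrow> square_integrable (f a)" "\<And>b. b \<in> B \<Longrightarrow> square_integrable (g b)"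
  shows "cross_moment (\<lambda>\<omega>. \<Sum>a\<in>A. c a * f a \<omega>) (\<lambda>\<omega>. \<Sum>b\<in>B. d b * g b \<omega>)
    = (\<Sum>a\<in>A. \<Sum>b\<in>B. c a * d b * cross_moment (f a) (g b))"
proof -
  have "cross_moment (\<lambda>\<omega>. \<Sum>a\<in>A. c a * f a \<omega>) (\<lambda>\<omega>. \<Sum>b\<in>B. d b * g b \<omega>)
      = (\<Sum>b\<in>B. d b * cross_moment (g b) (\<lambda>\<omega>. \<Sum>a\<in>A. c a * f a \<omega>))"
    using assms square_integrable_sum[of A "\<lambda>a \<omega>. c a * f a \<omega>"]
    by (subst cross_moment_sum_right) (auto intro: square_integrable_scale simp: cross_moment_commute)
  also have "\<dots> = (\<Sum>a\<in>A. \<Sum>b\<in>B. c a * d b * cross_moment (f a) (g b))"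
    using assms by (simp add: cross_moment_sum_right sum_distrib_left cross_moment_commute ac_simps
        sum.swap[of _ B])
  finally show ?thesis .
qed

lemma square_integrable_x0: "square_integrable x0"
  using x0_measurable x0_square_integrable by (simp add: square_integrable_def)

lemma square_integrable_r: "square_integrable (r t)"
  using r_measurable r_square_integrable by (simp add: square_integrable_def)

lemma square_integrable_w: "i < N \<Longrightarrow> square_integrable (w i t)"
  using w_measurable w_square_integrable by (simp add: square_integrable_def)

definition noise_at :: "nat \<Rightarrow> (nat \<Rightarrow> real) \<Rightarrow> real \<Rightarrow> 'w \<Rightarrow> real" where
  "noise_at t k c = (\<lambda>\<omega>. (\<Sum>l<N. k l * w l t \<omega>) + c * r t \<omega>)"

text \<open>A second-order substitute for ``f depends only on the data before time t'':
  f is uncorrelated with every noise from time t on.\<close>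

definition uncorrelated_from :: "nat \<Rightarrow> ('w \<Rightarrow> real) \<Rightarrow> bool" where
  "uncorrelated_from t f \<longleftrightarrow> square_integrable f
     \<and> (\<forall>s\<ge>t. cross_moment f (r s) = 0 \<and> (\<forall>j<N. cross_moment f (w j s) = 0))"

lemma square_integrable_noise_at: "square_integrable (noise_at t k c)"
  unfolding noise_at_def
  by (intro square_integrable_add square_integrable_sum square_integrable_scale
      square_integrable_r square_integrable_w) auto

lemma cross_moment_noise_at_right:
  assumes "square_integrable f"
  shows "cross_moment f (noise_at t k c)
    = (\<Sum>l<N. k l * cross_moment f (w l t)) + c * cross_moment f (r t)"
proof -
  have "square_integrable (\<lambda>\<omega>. \<Sum>l<N. k l * w l t \<omega>)"
    by (intro square_integrable_sum square_integrable_scale square_integrable_w) auto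
  moreover have "square_integrable (\<lambda>\<omega>. c * r t \<omega>)"
    by (intro square_integrable_scale square_integrable_r)
  moreover have "cross_moment f (\<lambda>\<omega>. \<Sum>l<N. k l * w l t \<omega>) = (\<Sum>l<N. k l * cross_moment f (w l t))"
    by (rule cross_moment_sum_right) (use assms square_integrable_w in auto)
  ultimately show ?thesis
    unfolding noise_at_def using assms by (simp add: cross_moment_add_right cross_moment_scale_right)
qed

lemma cross_moment_noise_at:
  "cross_moment (noise_at t k c) (noise_at t k' c') = \<sigma>w\<^sup>2 * (\<Sum>l<N. k l * k' l) + \<sigma>r\<^sup>2 * (c * c')"
proof -
  have ww: "cross_moment (w l t) (w m t) = (if l = m then \<sigma>w\<^sup>2 else 0)" if "l < N" "m < N" for l m
    using that w_variance w_w by (simp add: cross_moment_def power2_eq_square)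
  have wr: "cross_moment (w l t) (r t) = 0" if "l < N" for l
    using that w_r by (simp add: cross_moment_def)
  have rr: "cross_moment (r t) (r t) = \<sigma>r\<^sup>2"
    using r_variance by (simp add: cross_moment_def power2_eq_square)
  have "cross_moment (noise_at t k c) (noise_at t k' c')
      = (\<Sum>l<N. k l * cross_moment (noise_at t k' c') (w l t)) + c * cross_moment (noise_at t k' c') (r t)"
    by (subst cross_moment_commute) (rule cross_moment_noise_at_right[OF square_integrable_noise_at])
  also have "\<dots> = (\<Sum>l<N. k l * (k' l * \<sigma>w\<^sup>2)) + c * (c' * \<sigma>r\<^sup>2)"
    by (simp add: cross_moment_commute[of "noise_at t k' c'"] cross_moment_noise_at_right
        square_integrable_w square_integrable_r ww wr rr cross_moment_commute[of "r t" "w _ t"]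
        if_distrib[of "\<lambda>x. _ * x"] sum.If_cases)
  finally show ?thesis
    by (simp add: sum_distrib_left ac_simps)
qed

lemma cross_moment_noise_at_eq_0:
  assumes "uncorrelated_from t f"
  shows "cross_moment f (noise_at t k c) = 0"
  using assms by (simp add: uncorrelated_from_def cross_moment_noise_at_right)

lemma uncorrelated_from_mono: "uncorrelated_from t f \<Longrightarrow> t \<le> s \<Longrightarrow> uncorrelated_from s f"
  by (auto simp: uncorrelated_from_def)

lemma uncorrelated_from_const: "uncorrelated_from t (\<lambda>\<omega>. b)"
  using r_mean w_mean by (simp add: uncorrelated_from_def square_integrable_const cross_moment_def)

lemma uncorrelated_from_x0: "uncorrelated_from t x0"
  using x0_r x0_w by (simp add: uncorrelated_from_def square_integrable_x0 cross_moment_def)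

lemma uncorrelated_from_scale: "uncorrelated_from t f \<Longrightarrow> uncorrelated_from t (\<lambda>\<omega>. b * f \<omega>)"
  by (simp add: uncorrelated_from_def square_integrable_scale cross_moment_def mult.assoc)

lemma uncorrelated_from_linear_combination:
  assumes "\<And>a. a \<in> A \<Longrightarrow> uncorrelated_from t (f a)"
  shows "uncorrelated_from t (\<lambda>\<omega>. \<Sum>a\<in>A. c a * f a \<omega>)"
proof -
  have sq: "\<And>a. a \<in> A \<Longrightarrow> square_integrable (f a)"
    using assms by (simp add: uncorrelated_from_def)
  have "cross_moment (\<lambda>\<omega>. \<Sum>a\<in>A. c a * f a \<omega>) g = (\<Sum>a\<in>A. c a * cross_moment (f a) g)"
    if "square_integrable g" for g
    using cross_moment_sum_right[OF that sq] by (simp add: cross_moment_commute)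
  then show ?thesis
    using assms sq square_integrable_r square_integrable_w
    by (simp add: uncorrelated_from_def square_integrable_sum square_integrable_scale)
qed

lemma uncorrelated_from_add:
  "uncorrelated_from t f \<Longrightarrow> uncorrelated_from t g \<Longrightarrow> uncorrelated_from t (\<lambda>\<omega>. f \<omega> + g \<omega>)"
  using square_integrable_r square_integrable_w
  by (simp add: uncorrelated_from_def cross_moment_add_left square_integrable_add)

lemma uncorrelated_from_noise_at: "uncorrelated_from (Suc t) (noise_at t k c)"
proof -
  have "cross_moment (noise_at t k c) (r s) = 0" if "Suc t \<le> s" for s
    using that w_r r_r[of s t]
    by (simp add: cross_moment_commute[of "noise_at t k c"] cross_moment_noise_at_right
        square_integrable_r) (simp add: cross_moment_def mult.commute)
  moreover have "cross_moment (noise_at t k c) (w j s) = 0" if "Suc t \<le> s" "j < N" for s j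
    using that w_r w_w[of j _ s t]
    by (simp add: cross_moment_commute[of "noise_at t k c"] cross_moment_noise_at_right
        square_integrable_w) (simp add: cross_moment_def)
  ultimately show ?thesis
    by (auto simp: uncorrelated_from_def square_integrable_noise_at)
qed

end

section \<open>Steady-state covariance of a linear error recursion\<close>

locale linear_error_recursion = uncorrelated_noises M N x0 r w \<sigma>r \<sigma>w
  for M :: "'w measure" and N x0 r w \<sigma>r \<sigma>w +
  fixes Q :: "real mat" and k :: "nat \<Rightarrow> nat \<Rightarrow> real" and c :: real
    and e :: "nat \<Rightarrow> nat \<Rightarrow> 'w \<Rightarrow> real"
  assumes error_0: "\<And>i. i < N \<Longrightarrow> uncorrelated_from 0 (e 0 i)"
    and error_Suc: "\<And>t i. i < N \<Longrightarrow>
      e (Suc t) i = (\<lambda>\<omega>. (\<Sum>j<N. Q $$ (i, j) * e t j \<omega>) + noise_at t (k i) c \<omega>)"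
begin

lemma uncorrelated_from_error: "i < N \<Longrightarrow> uncorrelated_from t (e t i)"
proof (induction t arbitrary: i)
  case 0
  then show ?case by (rule error_0)
next
  case (Suc t)
  have "uncorrelated_from (Suc t) (\<lambda>\<omega>. \<Sum>j<N. Q $$ (i, j) * e t j \<omega>)"
    using Suc.IH by (intro uncorrelated_from_mono[OF uncorrelated_from_linear_combination]) auto
  then show ?case
    unfolding error_Suc[OF Suc.prems] by (intro uncorrelated_from_add uncorrelated_from_noise_at)
qed

lemma cross_moment_error_Suc:
  assumes i: "i < N" and j: "j < N"
  shows "cross_moment (e (Suc t) i) (e (Suc t) j)
    = (\<Sum>a<N. \<Sum>b<N. Q $$ (i, a) * Q $$ (j, b) * cross_moment (e t a) (e t b))
      + \<sigma>w\<^sup>2 * (\<Sum>l<N. k i l * k j l) + \<sigma>r\<^sup>2 * c\<^sup>2"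
proof -
  define A where "A i = (\<lambda>\<omega>. \<Sum>a<N. Q $$ (i, a) * e t a \<omega>)" for i
  have e: "square_integrable (e t a)" if "a < N" for a
    using uncorrelated_from_error[OF that] by (simp add: uncorrelated_from_def)
  have A: "uncorrelated_from t (A i)" for i
    unfolding A_def by (intro uncorrelated_from_linear_combination uncorrelated_from_error) simp
  then have A_sq: "square_integrable (A i)" for i
    by (simp add: uncorrelated_from_def)
  have e_Suc: "e (Suc t) i' = (\<lambda>\<omega>. A i' \<omega> + noise_at t (k i') c \<omega>)" if "i' < N" for i'
    using error_Suc[OF that] by (simp add: A_def)
  have "cross_moment (e (Suc t) i) (e (Suc t) j)
      = cross_moment (A i) (A j) + cross_moment (A i) (noise_at t (k j) c)
        + (cross_moment (noise_at t (k i) c) (A j) + cross_moment (noise_at t (k i) c) (noise_at t (k j) c))"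
    unfolding e_Suc[OF i] e_Suc[OF j] using A_sq square_integrable_noise_at
    by (simp add: cross_moment_add_left cross_moment_add_right square_integrable_add)
  also have "cross_moment (A i) (A j) = (\<Sum>a<N. \<Sum>b<N. Q $$ (i, a) * Q $$ (j, b) * cross_moment (e t a) (e t b))"
    unfolding A_def by (rule cross_moment_linear_combinations) (use e in auto)
  finally show ?thesis
    using cross_moment_noise_at_eq_0[OF A]
    by (simp add: cross_moment_commute[of "noise_at t (k i) c"] cross_moment_noise_at power2_eq_square)
qed

end

text \<open>The noise gain P^l covers both estimators: l = 0 for the first one, which uses its own
  observation, and l = 1 for the second one, which uses the P-average of the observations.\<close>

lemma (in uncorrelated_noises) steady_state_msd:
  fixes P :: "real mat" and lam init :: "nat \<Rightarrow> real" and e :: "nat \<Rightarrow> nat \<Rightarrow> 'w \<Rightarrow> real"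
  assumes N: "0 < N" and P: "P \<in> carrier_mat N N" and P_sym: "transpose_mat P = P"
    and P_rows: "\<And>i. i < N \<Longrightarrow> (\<Sum>j<N. P $$ (i, j)) = 1"
    and cp: "char_poly P = (\<Prod>i<N. [:- lam i, 1:])" and lam0: "lam 0 = 1"
    and stable: "spectral_radius (map_mat complex_of_real (a \<cdot>\<^sub>m (P - \<alpha> \<cdot>\<^sub>m 1\<^sub>m N))) < 1"
    and e_0: "\<And>i. i < N \<Longrightarrow> e 0 i = (\<lambda>\<omega>. init i - x0 \<omega>)"
    and e_Suc: "\<And>t i. i < N \<Longrightarrow> e (Suc t) i = (\<lambda>\<omega>. (\<Sum>j<N. (a \<cdot>\<^sub>m (P - \<alpha> \<cdot>\<^sub>m 1\<^sub>m N)) $$ (i, j) * e t j \<omega>)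
        + a * \<alpha> * (\<Sum>j<N. (P ^\<^sub>m l) $$ (i, j) * w j t \<omega>) - r t \<omega>)"
  shows "\<exists>\<Sigma>. (\<forall>i<N. \<forall>j<N. (\<lambda>t. expectation (\<lambda>\<omega>. e t i \<omega> * e t j \<omega>)) \<longlonglongrightarrow> \<Sigma> i j)
    \<and> (\<Sum>i<N. \<Sigma> i i) / real N = \<sigma>r\<^sup>2 / (1 - a\<^sup>2 * (1 - \<alpha>)\<^sup>2)
       + (\<Sum>i<N. a\<^sup>2 * \<alpha>\<^sup>2 * \<sigma>w\<^sup>2 * lam i ^ (2 * l) / (1 - a\<^sup>2 * (lam i - \<alpha>)\<^sup>2)) / real N"
proof -
  define Q where "Q = a \<cdot>\<^sub>m (P - \<alpha> \<cdot>\<^sub>m 1\<^sub>m N)"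
  have stable_eigen: "\<bar>a * (lam i - \<alpha>)\<bar> < 1" if "i < N" for i
    by (rule abs_affine_eigenvalue_lt_1[OF P cp stable that])
  interpret errors: linear_error_recursion M N x0 r w \<sigma>r \<sigma>w Q "\<lambda>i j. a * \<alpha> * (P ^\<^sub>m l) $$ (i, j)" "-1" e
  proof
    show "uncorrelated_from 0 (e 0 i)" if "i < N" for i
      using uncorrelated_from_add[OF uncorrelated_from_const uncorrelated_from_scale[OF uncorrelated_from_x0],
          of 0 "init i" "-1"]
      by (simp add: e_0[OF that])
    show "e (Suc t) i = (\<lambda>\<omega>. (\<Sum>j<N. Q $$ (i, j) * e t j \<omega>) + noise_at t (\<lambda>j. a * \<alpha> * (P ^\<^sub>m l) $$ (i, j)) (- 1) \<omega>)"
      if "i < N" for t i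
      by (simp add: e_Suc[OF that] Q_def noise_at_def sum_distrib_left algebra_simps)
  qed
  have Q_sym: "Q $$ (j, b) = Q $$ (b, j)" if "j < N" "b < N" for j b
    using arg_cong[OF transpose_affine_mat[OF P P_sym, of a \<alpha>], of "\<lambda>B. B $$ (b, j)"] P that
    by (simp add: Q_def)
  have cov_rec: "cross_moment (e (Suc t) i) (e (Suc t) j)
      = (\<Sum>a<N. \<Sum>b<N. Q $$ (i, a) * cross_moment (e t a) (e t b) * Q $$ (b, j))
        + \<sigma>w\<^sup>2 * (a * \<alpha>)\<^sup>2 * (P ^\<^sub>m (2 * l)) $$ (i, j) + \<sigma>r\<^sup>2"
    if i: "i < N" and j: "j < N" for t i j
  proof -
    have "(\<Sum>k<N. a * \<alpha> * (P ^\<^sub>m l) $$ (i, k) * (a * \<alpha> * (P ^\<^sub>m l) $$ (j, k)))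
        = (a * \<alpha>)\<^sup>2 * (P ^\<^sub>m (2 * l)) $$ (i, j)"
      unfolding symmetric_pow_mat_mult_transpose_entry[OF P P_sym i j, symmetric]
      by (simp add: sum_distrib_left power2_eq_square ac_simps)
    moreover have "(\<Sum>a<N. \<Sum>b<N. Q $$ (i, a) * Q $$ (j, b) * cross_moment (e t a) (e t b))
        = (\<Sum>a<N. \<Sum>b<N. Q $$ (i, a) * cross_moment (e t a) (e t b) * Q $$ (b, j))"
      using Q_sym[OF j] by (intro sum.cong refl) (simp add: ac_simps)
    ultimately show ?thesis
      using errors.cross_moment_error_Suc[OF i j, of t] by (simp add: ac_simps)
  qed
  have "\<exists>\<Sigma>. (\<forall>i<N. \<forall>j<N. (\<lambda>t. cross_moment (e t i) (e t j)) \<longlonglongrightarrow> \<Sigma> i j)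
    \<and> (\<Sum>i<N. \<Sigma> i i) = \<sigma>w\<^sup>2 * (a * \<alpha>)\<^sup>2 * (\<Sum>i<N. lam i ^ (2 * l) / (1 - (a * (lam i - \<alpha>))\<^sup>2))
      + \<sigma>r\<^sup>2 * real N / (1 - (a * (1 - \<alpha>))\<^sup>2)"
    by (rule lyapunov_recursion_steady_state[where P = P and n = N and c = a and d = \<alpha>, folded Q_def];
        fact N P P_sym P_rows cp lam0 stable_eigen cov_rec)
  then obtain \<Sigma> where lim: "\<forall>i<N. \<forall>j<N. (\<lambda>t. cross_moment (e t i) (e t j)) \<longlonglongrightarrow> \<Sigma> i j"
    and trace: "(\<Sum>i<N. \<Sigma> i i) = \<sigma>w\<^sup>2 * (a * \<alpha>)\<^sup>2 * (\<Sum>i<N. lam i ^ (2 * l) / (1 - (a * (lam i - \<alpha>))\<^sup>2))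
      + \<sigma>r\<^sup>2 * real N / (1 - (a * (1 - \<alpha>))\<^sup>2)"
    by blast
  have "(\<Sum>i<N. \<Sigma> i i) / real N = \<sigma>r\<^sup>2 / (1 - a\<^sup>2 * (1 - \<alpha>)\<^sup>2)
       + (\<Sum>i<N. a\<^sup>2 * \<alpha>\<^sup>2 * \<sigma>w\<^sup>2 * lam i ^ (2 * l) / (1 - a\<^sup>2 * (lam i - \<alpha>)\<^sup>2)) / real N"
    using N unfolding trace by (simp add: sum_distrib_left add_divide_distrib power_mult_distrib ac_simps)
  with lim show ?thesis
    by (auto simp: cross_moment_def)
qed

section \<open>The two estimators under independent noises\<close>

lemma indep_vars_imp_indep_var:
  fixes X :: "'i \<Rightarrow> 'a \<Rightarrow> real"
  assumes "prob_space M" "prob_space.indep_vars M (\<lambda>_. borel) X I" "i \<in> I" "j \<in> I" "i \<noteq> j"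
  shows "prob_space.indep_var M borel (X i) borel (X j)"
proof -
  interpret prob_space M by fact
  have "indep_vars (\<lambda>_. borel) X {i, j}"
    by (rule indep_vars_subset[OF assms(2)]) (use assms in auto)
  from indep_vars_sum[OF _ _ this] assms(5)
  show ?thesis by simp
qed

lemma (in prob_space) expectation_mult_eq_0_if_indep:
  fixes X Y :: "'a \<Rightarrow> real"
  assumes "indep_var borel X borel Y" "integrable M X" "integrable M Y" "expectation Y = 0"
  shows "expectation (\<lambda>\<omega>. X \<omega> * Y \<omega>) = 0"
  using indep_var_lebesgue_integral[OF assms(1-3)] assms(4) by simp

lemma uncorrelated_noises_if_independent:
  fixes M :: "'w measure" and x0 :: "'w \<Rightarrow> real" and r :: "nat \<Rightarrow> 'w \<Rightarrow> real"
    and w :: "nat \<Rightarrow> nat \<Rightarrow> 'w \<Rightarrow> real"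
  assumes M: "prob_space M"
    and x0: "x0 \<in> borel_measurable M" "integrable M (\<lambda>\<omega>. (x0 \<omega>)\<^sup>2)"
    and x0_indep: "prob_space.indep_var M
           (Pi\<^sub>M (UNIV :: (nat + nat \<times> nat) set) (\<lambda>_. borel)) (\<lambda>\<omega> _. x0 \<omega>)
           (Pi\<^sub>M (UNIV :: (nat + nat \<times> nat) set) (\<lambda>_. borel))
           (\<lambda>\<omega> k. case k of Inl t \<Rightarrow> r t \<omega>
                            | Inr (i, t) \<Rightarrow> (if i < N then w i t \<omega> else 0))"
    and r: "\<And>t. r t \<in> borel_measurable M" "\<And>t. integrable M (\<lambda>\<omega>. (r t \<omega>)\<^sup>2)"
      "\<And>t. prob_space.expectation M (r t) = 0"
      "\<And>t. prob_space.expectation M (\<lambda>\<omega>. (r t \<omega>)\<^sup>2) = \<sigma>r\<^sup>2"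
      "prob_space.indep_vars M (\<lambda>_. borel) r UNIV"
    and w: "\<And>i t. i < N \<Longrightarrow> w i t \<in> borel_measurable M"
      "\<And>i t. i < N \<Longrightarrow> integrable M (\<lambda>\<omega>. (w i t \<omega>)\<^sup>2)"
      "\<And>i t. i < N \<Longrightarrow> prob_space.expectation M (w i t) = 0"
      "\<And>i t. i < N \<Longrightarrow> prob_space.expectation M (\<lambda>\<omega>. (w i t \<omega>)\<^sup>2) = \<sigma>w\<^sup>2"
      "prob_space.indep_vars M (\<lambda>_. borel) (\<lambda>(i, t). w i t) ({..<N} \<times> UNIV)"
    and w_r: "\<And>i t s. i < N \<Longrightarrow> prob_space.expectation M (\<lambda>\<omega>. w i t \<omega> * r s \<omega>) = 0"
  shows "uncorrelated_noises M N x0 r w \<sigma>r \<sigma>w"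
proof -
  interpret prob_space M by fact
  have integrable: "integrable M x0" "\<And>t. integrable M (r t)" "\<And>i t. i < N \<Longrightarrow> integrable M (w i t)"
    using x0 r w by (auto intro: square_integrable_imp_integrable)
  have component: "(\<lambda>f. f k) \<in> Pi\<^sub>M (UNIV :: (nat + nat \<times> nat) set) (\<lambda>_. borel) \<rightarrow>\<^sub>M borel" for k
    by measurable
  have "indep_var borel x0 borel (r t)" for t
    using indep_var_compose[OF x0_indep component[of "Inl 0"] component[of "Inl t"]] by (simp add: o_def)
  moreover have "indep_var borel x0 borel (w j t)" if "j < N" for j t
    using indep_var_compose[OF x0_indep component[of "Inl 0"] component[of "Inr (j, t)"]] that
    by (simp add: o_def)
  moreover have "indep_var borel (r s) borel (r t)" if "s \<noteq> t" for s t
    using indep_vars_imp_indep_var[OF M r(5)] that by simp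
  moreover have "indep_var borel (w i s) borel (w j t)" if "i < N" "j < N" "(i, s) \<noteq> (j, t)" for i j s t
    using indep_vars_imp_indep_var[OF M w(5), of "(i, s)" "(j, t)"] that by simp
  ultimately show ?thesis
    using x0 r w w_r integrable
    by unfold_locales (auto intro: expectation_mult_eq_0_if_indep)
qed

lemma sum_affine_mat_mult:
  fixes P :: "'a :: comm_ring_1 mat"
  assumes P: "P \<in> carrier_mat n n" and i: "i < n"
  shows "(\<Sum>j<n. (c \<cdot>\<^sub>m (P - d \<cdot>\<^sub>m 1\<^sub>m n)) $$ (i, j) * v j) = c * (\<Sum>j<n. P $$ (i, j) * v j) - c * d * v i"
proof -
  have "(\<Sum>j<n. (c \<cdot>\<^sub>m (P - d \<cdot>\<^sub>m 1\<^sub>m n)) $$ (i, j) * v j)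
      = (\<Sum>j<n. c * (P $$ (i, j) * v j) - (if j = i then c * d * v i else 0))"
    using P i by (intro sum.cong) (auto simp: algebra_simps)
  also have "\<dots> = c * (\<Sum>j<n. P $$ (i, j) * v j) - c * d * v i"
    using i by (simp add: sum_subtractf sum_distrib_left)
  finally show ?thesis .
qed

lemma est_hat_error_Suc:
  fixes P :: "real mat"
  assumes P: "P \<in> carrier_mat N N" and row: "(\<Sum>j<N. P $$ (i, j)) = 1" and i: "i < N"
  shows "est_hat N P a \<alpha> (obs a x0 r w) c (Suc t) i \<omega> - state a x0 r (Suc t) \<omega>
    = (\<Sum>j<N. (a \<cdot>\<^sub>m (P - \<alpha> \<cdot>\<^sub>m 1\<^sub>m N)) $$ (i, j)
          * (est_hat N P a \<alpha> (obs a x0 r w) c t j \<omega> - state a x0 r t \<omega>))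
      + a * \<alpha> * w i t \<omega> - r t \<omega>"
proof -
  have est: "(\<Sum>j<N. P $$ (i, j) * (est_hat N P a \<alpha> (obs a x0 r w) c t j \<omega> - state a x0 r t \<omega>))
      = (\<Sum>j<N. P $$ (i, j) * est_hat N P a \<alpha> (obs a x0 r w) c t j \<omega>) - state a x0 r t \<omega>"
    using row by (simp add: right_diff_distrib sum_subtractf sum_distrib_right[symmetric])
  show ?thesis
    unfolding sum_affine_mat_mult[OF P i] est by (simp add: obs_def algebra_simps)
qed

lemma est_tilde_error_Suc:
  fixes P :: "real mat"
  assumes P: "P \<in> carrier_mat N N" and row: "(\<Sum>j<N. P $$ (i, j)) = 1" and i: "i < N"
  shows "est_tilde N P a \<alpha> (obs a x0 r w) c (Suc t) i \<omega> - state a x0 r (Suc t) \<omega>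
    = (\<Sum>j<N. (a \<cdot>\<^sub>m (P - \<alpha> \<cdot>\<^sub>m 1\<^sub>m N)) $$ (i, j)
          * (est_tilde N P a \<alpha> (obs a x0 r w) c t j \<omega> - state a x0 r t \<omega>))
      + a * \<alpha> * (\<Sum>j<N. P $$ (i, j) * w j t \<omega>) - r t \<omega>"
proof -
  have est: "(\<Sum>j<N. P $$ (i, j) * (est_tilde N P a \<alpha> (obs a x0 r w) c t j \<omega> - state a x0 r t \<omega>))
      = (\<Sum>j<N. P $$ (i, j) * est_tilde N P a \<alpha> (obs a x0 r w) c t j \<omega>) - state a x0 r t \<omega>"
    using row by (simp add: right_diff_distrib sum_subtractf sum_distrib_right[symmetric])
  have obs: "(\<Sum>j<N. P $$ (i, j) * obs a x0 r w j t \<omega>) = state a x0 r t \<omega> + (\<Sum>j<N. P $$ (i, j) * w j t \<omega>)"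
    using row by (simp add: obs_def distrib_left sum.distrib sum_distrib_right[symmetric])
  show ?thesis
    unfolding sum_affine_mat_mult[OF P i] est by (simp add: obs algebra_simps)
qed

theorem theorem1:
  fixes M :: "'w measure" and N :: nat and a \<alpha> \<sigma>r \<sigma>w :: real
    and P :: "real mat" and lam :: "nat \<Rightarrow> real"
    and x0 :: "'w \<Rightarrow> real" and r :: "nat \<Rightarrow> 'w \<Rightarrow> real" and w :: "nat \<Rightarrow> nat \<Rightarrow> 'w \<Rightarrow> real"
    and xh0 xt0 :: "nat \<Rightarrow> real"
  assumes "prob_space M"
    and "N \<ge> 2"
    and "0 < \<alpha>" "\<alpha> \<le> 1"
    and "sym_doubly_stochastic N P"
    and "eigenvalues_desc N P lam"
    and "lam 0 = 1" "lam 1 < 1" "-1 < lam (N - 1)"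
    and "spectral_radius (map_mat complex_of_real (a \<cdot>\<^sub>m (P - \<alpha> \<cdot>\<^sub>m 1\<^sub>m N))) < 1"
    and "x0 \<in> borel_measurable M"
    and "integrable M (\<lambda>\<omega>. (x0 \<omega>)\<^sup>2)"
    and "prob_space.indep_var M
           (Pi\<^sub>M (UNIV :: (nat + nat \<times> nat) set) (\<lambda>_. borel)) (\<lambda>\<omega> _. x0 \<omega>)
           (Pi\<^sub>M (UNIV :: (nat + nat \<times> nat) set) (\<lambda>_. borel))
           (\<lambda>\<omega> k. case k of Inl t \<Rightarrow> r t \<omega>
                            | Inr (i, t) \<Rightarrow> (if i < N then w i t \<omega> else 0))"
    and "\<And>t. r t \<in> borel_measurable M"
    and "\<And>t. integrable M (\<lambda>\<omega>. (r t \<omega>)\<^sup>2)"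
    and "\<And>t. prob_space.expectation M (r t) = 0"
    and "\<And>t. prob_space.expectation M (\<lambda>\<omega>. (r t \<omega>)\<^sup>2) = \<sigma>r\<^sup>2"
    and "prob_space.indep_vars M (\<lambda>_. borel) r UNIV"
    and "\<And>i t. i < N \<Longrightarrow> w i t \<in> borel_measurable M"
    and "\<And>i t. i < N \<Longrightarrow> integrable M (\<lambda>\<omega>. (w i t \<omega>)\<^sup>2)"
    and "\<And>i t. i < N \<Longrightarrow> prob_space.expectation M (w i t) = 0"
    and "\<And>i t. i < N \<Longrightarrow> prob_space.expectation M (\<lambda>\<omega>. (w i t \<omega>)\<^sup>2) = \<sigma>w\<^sup>2"
    and "prob_space.indep_vars M (\<lambda>_. borel) (\<lambda>(i, t). w i t) ({..<N} \<times> UNIV)"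
    and "\<And>i t s. i < N \<Longrightarrow> prob_space.expectation M (\<lambda>\<omega>. w i t \<omega> * r s \<omega>) = 0"
  shows
    "let x = state a x0 r; y = obs a x0 r w;
         xh = est_hat N P a \<alpha> y xh0; xt = est_tilde N P a \<alpha> y xt0;
         R = \<sigma>r\<^sup>2 / (1 - a\<^sup>2 * (1 - \<alpha>)\<^sup>2)
     in (\<exists>\<Sigma>h :: nat \<Rightarrow> nat \<Rightarrow> real.
           (\<forall>i<N. \<forall>j<N. (\<lambda>t. prob_space.expectation M
               (\<lambda>\<omega>. (xh t i \<omega> - x t \<omega>) * (xh t j \<omega> - x t \<omega>))) \<longlonglongrightarrow> \<Sigma>h i j)
         \<and> (\<Sum>i<N. \<Sigma>h i i) / real N
             = R + (\<Sum>i<N. a\<^sup>2 * \<alpha>\<^sup>2 * \<sigma>w\<^sup>2 / (1 - a\<^sup>2 * (lam i - \<alpha>)\<^sup>2)) / real N)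
      \<and> (\<exists>\<Sigma>t :: nat \<Rightarrow> nat \<Rightarrow> real.
           (\<forall>i<N. \<forall>j<N. (\<lambda>t. prob_space.expectation M
               (\<lambda>\<omega>. (xt t i \<omega> - x t \<omega>) * (xt t j \<omega> - x t \<omega>))) \<longlonglongrightarrow> \<Sigma>t i j)
         \<and> (\<Sum>i<N. \<Sigma>t i i) / real N
             = R + (\<Sum>i<N. a\<^sup>2 * \<alpha>\<^sup>2 * \<sigma>w\<^sup>2 * (lam i)\<^sup>2 / (1 - a\<^sup>2 * (lam i - \<alpha>)\<^sup>2)) / real N)"
proof -
  interpret uncorrelated_noises M N x0 r w \<sigma>r \<sigma>w
    by (rule uncorrelated_noises_if_independent) (use assms in auto)
  have N: "0 < N" using assms(2) by simp
  have P: "P \<in> carrier_mat N N" and P_sym: "transpose_mat P = P"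
    and P_rows: "\<And>i. i < N \<Longrightarrow> (\<Sum>j<N. P $$ (i, j)) = 1"
    using assms(5) by (auto simp: sym_doubly_stochastic_def)
  have cp: "char_poly P = (\<Prod>i<N. [:- lam i, 1:])"
    using assms(6) by (simp add: eigenvalues_desc_def)
  note steady_state = steady_state_msd[OF N P P_sym P_rows cp assms(7,10)]
  show ?thesis
    unfolding Let_def
    using steady_state[where l = 0 and init = xh0
        and e = "\<lambda>t i \<omega>. est_hat N P a \<alpha> (obs a x0 r w) xh0 t i \<omega> - state a x0 r t \<omega>"]
      steady_state[where l = 1 and init = xt0
        and e = "\<lambda>t i \<omega>. est_tilde N P a \<alpha> (obs a x0 r w) xt0 t i \<omega> - state a x0 r t \<omega>"]
    by (simp add: fun_eq_iff est_hat_error_Suc[OF P P_rows] est_tilde_error_Suc[OF P P_rows]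
        carrier_matD[OF P] if_distrib[of "\<lambda>x. x * _"] power2_eq_square
        del: est_hat.simps(2) est_tilde.simps(2) state.simps(2))
qed

end
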